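(* Let $k\ge2$, let $A=\{a_1,\dots,a_n\}$ be a sorted multiset of positive integers ($a_1\le\dots\le a_n$), and let $p$ be an integer with $1\le p\le n-k+1$. Let $Q=\sum_{i=1}^pa_i$ and $q=\max\{i: a_i\le Q\}$. Then the $k$-SSR$_R$ instance $(A,p)$ has an optimal solution $(S_1,\dots,S_k)$ satisfying: (1) every set $S_i$ containing only elements $j$ with $a_j\le Q$ satisfies $\Sigma(S_i,A)<2Q$; (2) every set $S_i$ containing an element $j$ with $a_j>Q$ is a singleton; (3) if $x\ge0$ denotes the number of singleton sets $\{j\}$ in the solution with $a_j>Q$, then the union of these singleton sets is $\{q+1,q+2,\dots,q+x\}$.
   Context: $[n]=\{1,\dots,n\}$; "elements" of sets are indices in $[n]$. For $S\subseteq[n]$, $\Sigma(S,A)=\sum_{i\in S}a_i$. For pairwise disjoint $S_1,\dots,S_k\subseteq[n]$, $\mathcal{R}(S_1,\dots,S_k,A)=\max_i\Sigma(S_i,A)/\min_i\Sigma(S_i,A)$ if the minimum is positive and $+\infty$ otherwise. The $k$-SSR$_R$ problem: given sorted $A$ and integer $p$ with $1\le p\le n-k+1$, find pairwise disjoint $S_1,\dots,S_k\subseteq[n]$ with $\max(S_1)=p$ and $\max(S_i)>p$ for $1<i\le k$ minimizing $\mathcal{R}(S_1,\dots,S_k,A)$; an optimal solution is a feasible one of minimum ratio. *)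

theory Defs
  imports Complex_Main "HOL-Library.Extended_Real"
begin

text \<open>The instance A = (a_1,...,a_n) is a function a :: nat => nat, used on indices 1..n.
  A k-tuple of sets (S_1,...,S_k) is a function S :: nat => nat set, used on 1..k.\<close>

definition setsum :: "nat set \<Rightarrow> (nat \<Rightarrow> nat) \<Rightarrow> nat" where
  "setsum S a = (\<Sum>i\<in>S. a i)"

definition ratio :: "nat \<Rightarrow> (nat \<Rightarrow> nat set) \<Rightarrow> (nat \<Rightarrow> nat) \<Rightarrow> ereal" where
  "ratio k S a =
     (let mx = Max ((\<lambda>i. setsum (S i) a) ` {1..k});
          mn = Min ((\<lambda>i. setsum (S i) a) ` {1..k})
      in if mn > 0 then ereal (real mx / real mn) else \<infinity>)"

definition feasible :: "nat \<Rightarrow> nat \<Rightarrow> nat \<Rightarrow> (nat \<Rightarrow> nat set) \<Rightarrow> bool" where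
  "feasible n k p S \<longleftrightarrow>
     (\<forall>i\<in>{1..k}. S i \<subseteq> {1..n} \<and> S i \<noteq> {}) \<and>
     (\<forall>i\<in>{1..k}. \<forall>j\<in>{1..k}. i \<noteq> j \<longrightarrow> S i \<inter> S j = {}) \<and>
     Max (S 1) = p \<and>
     (\<forall>i\<in>{2..k}. Max (S i) > p)"

definition optimal :: "nat \<Rightarrow> nat \<Rightarrow> nat \<Rightarrow> (nat \<Rightarrow> nat) \<Rightarrow> (nat \<Rightarrow> nat set) \<Rightarrow> bool" where
  "optimal n k p a S \<longleftrightarrow> feasible n k p S \<and>
     (\<forall>T. feasible n k p T \<longrightarrow> ratio k S a \<le> ratio k T a)"

end

theory Submission
  imports Defs "HOL-Library.FuncSet"
begin

text \<open>As S_1 \<subseteq> {1..p}, its smallest set sum is at most Q.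
  A set all of whose elements are at most Q but whose sum is at least 2Q is shrunk greedily, keeping
  its maximum, to a subset with sum in [Q, 2Q). A set containing an element above Q has its maximum
  beyond q; ranking these maxima, the set of rank r is replaced by the singleton {q + r}, where
  Q < a_(q+r) and q + r does not exceed the old maximum. Both operations keep feasibility and
  keep every set sum between the old minimum and the old sum of the same set, so the ratio does not
  grow and optimality is preserved.\<close>

definition heavy_indices :: "nat \<Rightarrow> nat \<Rightarrow> (nat \<Rightarrow> nat) \<Rightarrow> (nat \<Rightarrow> nat set) \<Rightarrow> nat set" where
  "heavy_indices Q k a S = {i\<in>{1..k}. \<exists>j\<in>S i. Q < a j}"

definition large_singletons :: "nat \<Rightarrow> nat \<Rightarrow> (nat \<Rightarrow> nat) \<Rightarrow> (nat \<Rightarrow> nat set) \<Rightarrow> nat set" where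
  "large_singletons Q k a S = {i\<in>{1..k}. \<exists>j. S i = {j} \<and> Q < a j}"

lemma le_iff_le_Max_threshold:
  fixes a :: "nat \<Rightarrow> nat"
  assumes mono: "\<forall>i\<in>{1..n}. \<forall>j\<in>{1..n}. i \<le> j \<longrightarrow> a i \<le> a j"
    and "i \<in> {1..n}" "a i \<le> Q" and "j \<in> {1..n}"
  shows "a j \<le> Q \<longleftrightarrow> j \<le> Max {i\<in>{1..n}. a i \<le> Q}"
proof -
  let ?q = "Max {i\<in>{1..n}. a i \<le> Q}"
  have "?q \<in> {i\<in>{1..n}. a i \<le> Q}" using assms(2,3) by (intro Max_in) auto
  then have q: "?q \<in> {1..n}" "a ?q \<le> Q" by auto
  show ?thesis
  proof
    assume "a j \<le> Q"
    then show "j \<le> ?q" using \<open>j \<in> {1..n}\<close> by (intro Max_ge) auto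
  next
    assume "j \<le> ?q"
    then have "a j \<le> a ?q" using mono q \<open>j \<in> {1..n}\<close> by blast
    then show "a j \<le> Q" using q by simp
  qed
qed

lemma ex_subset_sum_between:
  assumes "finite S" "x \<in> S" "\<forall>j\<in>S. a j \<le> Q" "Q \<le> setsum S a" "0 < Q"
  shows "\<exists>U\<subseteq>S. x \<in> U \<and> Q \<le> setsum U a \<and> setsum U a < 2 * Q"
  using assms
proof (induction S rule: finite_remove_induct)
  case empty
  then show ?case by simp
next
  case (remove A)
  show ?case
  proof (cases "setsum A a < 2 * Q")
    case True
    then show ?thesis using remove.prems by blast
  next
    case False
    then have "A \<noteq> {x}" using remove.prems by (auto simp: setsum_def)
    then obtain y where y: "y \<in> A" "y \<noteq> x" using remove.prems(1) by blast
    have "setsum A a = setsum (A - {y}) a + a y"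
      unfolding setsum_def using y remove.hyps(1) by (simp add: sum.remove)
    then have "Q \<le> setsum (A - {y}) a" using False y remove.prems(2) by fastforce
    then show ?thesis using remove.IH[OF y(1)] remove.prems y by blast
  qed
qed

lemma bij_betw_rank:
  fixes N :: "'a::linorder set"
  assumes "finite N"
  shows "bij_betw (\<lambda>x. card {y\<in>N. y \<le> x}) N {1..card N}"
proof -
  let ?rank = "\<lambda>x. card {y\<in>N. y \<le> x}"
  have "strict_mono_on N ?rank"
  proof (rule strict_mono_onI)
    fix x y assume "x \<in> N" "y \<in> N" "x < y"
    then have "{z\<in>N. z \<le> x} \<subseteq> {z\<in>N. z \<le> y}" "y \<in> {z\<in>N. z \<le> y} - {z\<in>N. z \<le> x}"
      by auto
    then have "{z\<in>N. z \<le> x} \<subset> {z\<in>N. z \<le> y}" by blast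
    then show "?rank x < ?rank y" using assms by (intro psubset_card_mono) auto
  qed
  then have "inj_on ?rank N" by (rule strict_mono_on_imp_inj_on)
  moreover have "?rank ` N \<subseteq> {1..card N}"
  proof
    fix r assume "r \<in> ?rank ` N"
    then obtain x where "x \<in> N" "r = ?rank x" by blast
    then have "{y\<in>N. y \<le> x} \<noteq> {}" "{y\<in>N. y \<le> x} \<subseteq> N" by auto
    then show "r \<in> {1..card N}"
      using assms \<open>r = ?rank x\<close> by (simp add: Suc_leI card_gt_0_iff card_mono)
  qed
  ultimately show ?thesis
    unfolding bij_betw_def by (simp add: card_image card_subset_eq)
qed

lemma rank_le:
  fixes N :: "nat set"
  assumes "N \<subseteq> {q<..}" "x \<in> N"
  shows "q + card {y\<in>N. y \<le> x} \<le> x"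
proof -
  have "card {y\<in>N. y \<le> x} \<le> card {q<..x}"
    using assms(1) by (intro card_mono) auto
  then show ?thesis using assms by auto
qed

lemma ex_bij_betw_interval_le:
  fixes f :: "'a \<Rightarrow> nat"
  assumes "finite H" "inj_on f H" "\<forall>i\<in>H. q < f i"
  shows "\<exists>g. bij_betw g H {q+1..q + card H} \<and> (\<forall>i\<in>H. g i \<le> f i)"
proof -
  define N where "N = f ` H"
  let ?rank = "\<lambda>x. card {y\<in>N. y \<le> x}"
  have "bij_betw f H N" using assms(2) unfolding N_def by (rule inj_on_imp_bij_betw)
  moreover have "bij_betw ?rank N {1..card H}"
    using bij_betw_rank[of N] assms(1,2) unfolding N_def by (simp add: card_image)
  moreover have "bij_betw (\<lambda>r. q + r) {1..card H} {q+1..q + card H}"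
    by (simp add: bij_betw_def)
  ultimately have "bij_betw ((\<lambda>r. q + r) \<circ> ?rank \<circ> f) H {q+1..q + card H}"
    by (blast intro: bij_betw_trans)
  moreover have "\<forall>i\<in>H. ((\<lambda>r. q + r) \<circ> ?rank \<circ> f) i \<le> f i"
    using assms(3) rank_le[of N q] unfolding N_def by auto
  ultimately show ?thesis by blast
qed

lemma
  assumes "feasible n k p S" "i \<in> {1..k}"
  shows feasible_subset: "S i \<subseteq> {1..n}"
    and feasible_finite: "finite (S i)"
    and feasible_Max_in: "Max (S i) \<in> S i"
proof -
  show sub: "S i \<subseteq> {1..n}" using assms unfolding feasible_def by blast
  show fin: "finite (S i)" using sub by (rule finite_subset) simp
  show "Max (S i) \<in> S i" using fin assms unfolding feasible_def by auto
qed

lemma feasible_first_le_sum: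
  assumes "feasible n k p S" "1 \<le> k"
  shows "setsum (S 1) a \<le> (\<Sum>i=1..p. a i)"
proof -
  have "S 1 \<subseteq> {1..p}"
  proof
    fix j assume "j \<in> S 1"
    moreover have "Max (S 1) = p" "finite (S 1)" "S 1 \<subseteq> {1..n}"
      using assms feasible_finite feasible_subset unfolding feasible_def by auto
    ultimately show "j \<in> {1..p}" by (metis Max_ge atLeastAtMost_iff subsetD)
  qed
  then show ?thesis unfolding setsum_def by (intro sum_mono2) auto
qed

lemma feasible_consecutive_singletons:
  assumes "1 \<le> p" "p + k \<le> n + 1"
  shows "feasible n k p (\<lambda>i. {p + i - 1})"
  using assms unfolding feasible_def by auto

lemma feasible_if_subsets_keep_Max:
  assumes "feasible n k p S" "1 \<le> k" "\<forall>i\<in>{1..k}. T i \<subseteq> S i \<and> Max (S i) \<in> T i"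
  shows "feasible n k p T"
proof -
  have Max_eq: "Max (T i) = Max (S i)" if "i \<in> {1..k}" for i
  proof -
    have "finite (S i)" "T i \<subseteq> S i" "Max (S i) \<in> T i"
      using feasible_finite[OF assms(1) that] assms(3) that by auto
    then show ?thesis by (intro Max_eqI) (auto intro: finite_subset)
  qed
  show ?thesis
    unfolding feasible_def
  proof (intro conjI ballI impI)
    fix i assume "i \<in> {1..k}"
    then show "T i \<subseteq> {1..n}" "T i \<noteq> {}" using assms(3) feasible_subset[OF assms(1)] by blast+
  next
    fix i j assume "i \<in> {1..k}" "j \<in> {1..k}" "i \<noteq> j"
    then show "T i \<inter> T j = {}" using assms unfolding feasible_def by blast
  next
    show "Max (T 1) = p" using assms Max_eq[of 1] unfolding feasible_def by simp
  next
    fix i assume "i \<in> {2..k}"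
    then show "p < Max (T i)" using assms Max_eq[of i] unfolding feasible_def by simp
  qed
qed

lemma feasible_replace_by_singletons:
  assumes "feasible n k p S" "1 \<notin> H" "inj_on g H" "g ` H \<subseteq> {p<..n}"
    and "\<forall>i\<in>H. \<forall>j\<in>{1..k} - H. g i \<notin> S j"
  shows "feasible n k p (\<lambda>i. if i \<in> H then {g i} else S i)"
  using assms unfolding feasible_def by (auto dest: inj_onD)

lemma ratio_le_if_sums_within:
  assumes "\<forall>i\<in>{1..k}. Min ((\<lambda>i. setsum (S i) a) ` {1..k}) \<le> setsum (T i) a \<and>
                        setsum (T i) a \<le> Max ((\<lambda>i. setsum (S i) a) ` {1..k})"
  shows "ratio k T a \<le> ratio k S a"
proof (cases "k = 0")
  case True
  then show ?thesis by (simp add: ratio_def)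
next
  case False
  define sS where "sS = (\<lambda>i. setsum (S i) a) ` {1..k}"
  define sT where "sT = (\<lambda>i. setsum (T i) a) ` {1..k}"
  have "sT \<noteq> {}" using False by (auto simp: sT_def)
  then have bounds: "Max sT \<le> Max sS" "Min sS \<le> Min sT"
    using assms by (auto simp: sS_def sT_def)
  show ?thesis
  proof (cases "0 < Min sS")
    case True
    then have "real (Max sT) / real (Min sT) \<le> real (Max sS) / real (Min sS)"
      using bounds by (intro frac_le) auto
    then show ?thesis
      using True bounds unfolding ratio_def Let_def sS_def[symmetric] sT_def[symmetric] by simp
  next
    case False
    then show ?thesis unfolding ratio_def Let_def sS_def[symmetric] by simp
  qed
qed

lemma optimal_if_sums_squeezed:
  assumes "optimal n k p a S" "feasible n k p T"
    and "\<forall>i\<in>{1..k}. setsum (T i) a \<le> setsum (S i) a"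
    and "\<forall>i\<in>{1..k}. \<exists>j\<in>{1..k}. setsum (S j) a \<le> setsum (T i) a"
  shows "optimal n k p a T"
proof -
  have "ratio k T a \<le> ratio k S a"
  proof (intro ratio_le_if_sums_within ballI conjI)
    fix i assume i: "i \<in> {1..k}"
    then obtain j where "j \<in> {1..k}" "setsum (S j) a \<le> setsum (T i) a" using assms(4) by blast
    then show "Min ((\<lambda>i. setsum (S i) a) ` {1..k}) \<le> setsum (T i) a"
      by (meson Min_le finite_atLeastAtMost finite_imageI imageI order_trans)
    show "setsum (T i) a \<le> Max ((\<lambda>i. setsum (S i) a) ` {1..k})"
      using i assms(3) by (meson Max_ge finite_atLeastAtMost finite_imageI imageI order_trans)
  qed
  then show ?thesis using assms(1,2) unfolding optimal_def by (meson order_trans)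
qed

lemma ratio_restrict: "ratio k (restrict S {1..k}) a = ratio k S a"
proof -
  have "(\<lambda>i. setsum (restrict S {1..k} i) a) ` {1..k} = (\<lambda>i. setsum (S i) a) ` {1..k}"
    by (rule image_cong) auto
  then show ?thesis unfolding ratio_def by simp
qed

lemma ex_optimal:
  assumes "feasible n k p S"
  shows "\<exists>S. optimal n k p a S"
proof -
  define V where "V = (\<lambda>T. ratio k T a) ` {T. feasible n k p T}"
  have "V \<subseteq> (\<lambda>T. ratio k T a) ` (\<Pi>\<^sub>E i\<in>{1..k}. Pow {1..n})"
  proof
    fix v assume "v \<in> V"
    then obtain T where T: "feasible n k p T" "v = ratio k T a" unfolding V_def by auto
    then have "restrict T {1..k} \<in> (\<Pi>\<^sub>E i\<in>{1..k}. Pow {1..n})"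
      unfolding feasible_def by auto
    then show "v \<in> (\<lambda>T. ratio k T a) ` (\<Pi>\<^sub>E i\<in>{1..k}. Pow {1..n})"
      using T ratio_restrict by (metis image_eqI)
  qed
  then have "finite V" by (rule finite_subset) (intro finite_imageI finite_PiE; simp)
  moreover have "V \<noteq> {}" using assms unfolding V_def by auto
  ultimately have "Min V \<in> V" "\<forall>v\<in>V. Min V \<le> v" by simp_all
  then show ?thesis unfolding V_def optimal_def by auto
qed

lemma optimal_shrink:
  assumes opt: "optimal n k p a S" and "1 \<le> k" and first: "setsum (S 1) a \<le> Q"
    and shrink: "\<forall>i\<in>{1..k}. T i \<subseteq> S i \<and> Max (S i) \<in> T i \<and> (T i = S i \<or> Q \<le> setsum (T i) a)"
  shows "optimal n k p a T"
proof -
  have feas: "feasible n k p S" using opt by (simp add: optimal_def)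
  have "feasible n k p T" using shrink by (intro feasible_if_subsets_keep_Max[OF feas \<open>1 \<le> k\<close>]) blast
  moreover have "\<forall>i\<in>{1..k}. setsum (T i) a \<le> setsum (S i) a"
    unfolding setsum_def using shrink feasible_finite[OF feas] by (simp add: sum_mono2)
  moreover have "\<forall>i\<in>{1..k}. \<exists>j\<in>{1..k}. setsum (S j) a \<le> setsum (T i) a"
  proof
    fix i assume i: "i \<in> {1..k}"
    then consider "T i = S i" | "Q \<le> setsum (T i) a" using shrink by blast
    then show "\<exists>j\<in>{1..k}. setsum (S j) a \<le> setsum (T i) a"
    proof cases
      case 1
      then show ?thesis using i by (intro bexI[of _ i]) auto
    next
      case 2
      then show ?thesis using first \<open>1 \<le> k\<close> by (intro bexI[of _ 1]) auto
    qed
  qed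
  ultimately show ?thesis by (rule optimal_if_sums_squeezed[OF opt])
qed

lemma ex_optimal_light_sums_lt:
  assumes opt: "optimal n k p a S" and "1 \<le> k" "0 < Q" and first: "setsum (S 1) a \<le> Q"
  shows "\<exists>T. optimal n k p a T \<and>
    (\<forall>i\<in>{1..k}. (\<forall>j\<in>T i. a j \<le> Q) \<longrightarrow> setsum (T i) a < 2 * Q)"
proof -
  have feas: "feasible n k p S" using opt by (simp add: optimal_def)
  define L where "L = {i\<in>{1..k}. (\<forall>j\<in>S i. a j \<le> Q) \<and> 2 * Q \<le> setsum (S i) a}"
  have "\<forall>i\<in>L. \<exists>U. U \<subseteq> S i \<and> Max (S i) \<in> U \<and> Q \<le> setsum U a \<and> setsum U a < 2 * Q"
  proof
    fix i assume "i \<in> L"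
    then have i: "i \<in> {1..k}" and "\<forall>j\<in>S i. a j \<le> Q" "Q \<le> setsum (S i) a"
      unfolding L_def by auto
    then show "\<exists>U. U \<subseteq> S i \<and> Max (S i) \<in> U \<and> Q \<le> setsum U a \<and> setsum U a < 2 * Q"
      using ex_subset_sum_between[OF feasible_finite[OF feas i] feasible_Max_in[OF feas i]] \<open>0 < Q\<close>
      by blast
  qed
  then obtain U where U: "\<forall>i\<in>L. U i \<subseteq> S i \<and> Max (S i) \<in> U i \<and>
                               Q \<le> setsum (U i) a \<and> setsum (U i) a < 2 * Q"
    by (metis bchoice)
  define T where "T = (\<lambda>i. if i \<in> L then U i else S i)"
  have "optimal n k p a T"
    using U feasible_Max_in[OF feas]
    by (intro optimal_shrink[OF opt \<open>1 \<le> k\<close> first]) (simp add: T_def)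
  moreover have "\<forall>i\<in>{1..k}. (\<forall>j\<in>T i. a j \<le> Q) \<longrightarrow> setsum (T i) a < 2 * Q"
  proof (intro ballI impI)
    fix i assume i: "i \<in> {1..k}" and light: "\<forall>j\<in>T i. a j \<le> Q"
    show "setsum (T i) a < 2 * Q"
    proof (cases "i \<in> L")
      case True
      then show ?thesis using U by (simp add: T_def)
    next
      case False
      then have "T i = S i" by (simp add: T_def)
      moreover have "\<not> 2 * Q \<le> setsum (S i) a"
        using False i light \<open>T i = S i\<close> unfolding L_def by simp
      ultimately show ?thesis by simp
    qed
  qed
  ultimately show ?thesis by blast
qed

lemma light_le_threshold:
  assumes "feasible n k p S" "\<forall>j\<in>{1..n}. a j \<le> Q \<longleftrightarrow> j \<le> q"
    and "i \<in> {1..k} - heavy_indices Q k a S" "j \<in> S i"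
  shows "j \<le> q"
proof -
  have "a j \<le> Q" using assms(3,4) unfolding heavy_indices_def by auto
  moreover have "j \<in> {1..n}" using assms(1,3,4) feasible_subset by blast
  ultimately show ?thesis using assms(2) by blast
qed

lemma first_notin_heavy_indices:
  assumes "feasible n k p S" "1 \<le> k" "setsum (S 1) a \<le> Q"
  shows "1 \<notin> heavy_indices Q k a S"
proof -
  have "a j \<le> Q" if "j \<in> S 1" for j
    using that assms feasible_finite[of n k p S 1] unfolding setsum_def
    by (meson atLeastAtMost_iff le_refl member_le_sum order.trans zero_le)
  then show ?thesis unfolding heavy_indices_def by (auto simp: not_less)
qed

lemma feasible_heavy_to_singletons:
  assumes feas: "feasible n k p S" and "1 \<le> k"
    and light_iff: "\<forall>j\<in>{1..n}. a j \<le> Q \<longleftrightarrow> j \<le> q"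
    and first: "setsum (S 1) a \<le> Q"
    and g: "inj_on g (heavy_indices Q k a S)"
      "\<forall>i\<in>heavy_indices Q k a S. q < g i \<and> g i \<le> Max (S i)"
  shows "feasible n k p (\<lambda>i. if i \<in> heavy_indices Q k a S then {g i} else S i)"
proof -
  let ?H = "heavy_indices Q k a S"
  have one: "1 \<in> {1..k}" using \<open>1 \<le> k\<close> by simp
  have "1 \<notin> ?H" using first_notin_heavy_indices[OF feas \<open>1 \<le> k\<close> first] .
  then have "p \<le> q"
    using light_le_threshold[OF feas light_iff, of 1 p] feasible_Max_in[OF feas one] one feas
    unfolding feasible_def by simp
  show ?thesis
  proof (rule feasible_replace_by_singletons[OF feas \<open>1 \<notin> ?H\<close> g(1)])
    have "Max (S i) \<le> n" if "i \<in> ?H" for i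
      using that feasible_Max_in[OF feas] feasible_subset[OF feas]
      unfolding heavy_indices_def by fastforce
    then show "g ` ?H \<subseteq> {p<..n}" using g(2) \<open>p \<le> q\<close> by fastforce
    show "\<forall>i\<in>?H. \<forall>j\<in>{1..k} - ?H. g i \<notin> S j"
      using g(2) light_le_threshold[OF feas light_iff] by fastforce
  qed
qed

lemma optimal_heavy_to_singletons:
  assumes opt: "optimal n k p a S" and "1 \<le> k"
    and mono: "\<forall>i\<in>{1..n}. \<forall>j\<in>{1..n}. i \<le> j \<longrightarrow> a i \<le> a j"
    and light_iff: "\<forall>j\<in>{1..n}. a j \<le> Q \<longleftrightarrow> j \<le> q"
    and first: "setsum (S 1) a \<le> Q"
    and g: "inj_on g (heavy_indices Q k a S)"
      "\<forall>i\<in>heavy_indices Q k a S. q < g i \<and> g i \<le> Max (S i)"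
  shows "optimal n k p a (\<lambda>i. if i \<in> heavy_indices Q k a S then {g i} else S i)"
proof -
  let ?H = "heavy_indices Q k a S"
  define T where "T = (\<lambda>i. if i \<in> ?H then {g i} else S i)"
  have feas: "feasible n k p S" using opt by (simp add: optimal_def)
  have a_g: "Q < a (g i)" "a (g i) \<le> setsum (S i) a" if "i \<in> ?H" for i
  proof -
    have i: "i \<in> {1..k}" using that unfolding heavy_indices_def by simp
    have Max_n: "Max (S i) \<in> {1..n}"
      using feasible_Max_in[OF feas i] feasible_subset[OF feas i] by blast
    then have "g i \<in> {1..n}" using g(2) that by auto
    then show "Q < a (g i)" using light_iff g(2) that by (metis not_le)
    have "a (g i) \<le> a (Max (S i))" using \<open>g i \<in> {1..n}\<close> Max_n mono g(2) that by blast
    also have "a (Max (S i)) \<le> setsum (S i) a"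
      unfolding setsum_def using feasible_Max_in[OF feas i] feasible_finite[OF feas i]
      by (intro member_le_sum) auto
    finally show "a (g i) \<le> setsum (S i) a" .
  qed
  have "feasible n k p T"
    unfolding T_def using feasible_heavy_to_singletons[OF feas \<open>1 \<le> k\<close> light_iff first g] .
  moreover have "\<forall>i\<in>{1..k}. setsum (T i) a \<le> setsum (S i) a"
    using a_g by (simp add: T_def setsum_def)
  moreover have "\<forall>i\<in>{1..k}. \<exists>j\<in>{1..k}. setsum (S j) a \<le> setsum (T i) a"
  proof
    fix i assume i: "i \<in> {1..k}"
    show "\<exists>j\<in>{1..k}. setsum (S j) a \<le> setsum (T i) a"
    proof (cases "i \<in> ?H")
      case True
      then have "setsum (S 1) a \<le> setsum (T i) a"
        using a_g(1)[OF True] first by (simp add: T_def setsum_def)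
      then show ?thesis using \<open>1 \<le> k\<close> by (intro bexI[of _ 1]) auto
    next
      case False
      then show ?thesis using i by (auto simp: T_def)
    qed
  qed
  ultimately show ?thesis using optimal_if_sums_squeezed[OF opt] unfolding T_def by blast
qed

lemma ex_heavy_positions:
  assumes feas: "feasible n k p S"
    and light_iff: "\<forall>j\<in>{1..n}. a j \<le> Q \<longleftrightarrow> j \<le> q"
  shows "\<exists>g. bij_betw g (heavy_indices Q k a S) {q+1..q + card (heavy_indices Q k a S)} \<and>
    (\<forall>i\<in>heavy_indices Q k a S. g i \<le> Max (S i))"
proof -
  let ?H = "heavy_indices Q k a S"
  have "q < Max (S i)" if "i \<in> ?H" for i
  proof -
    from that obtain j where i: "i \<in> {1..k}" and j: "j \<in> S i" "Q < a j"
      unfolding heavy_indices_def by blast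
    have "j \<in> {1..n}" using feasible_subset[OF feas i] j by blast
    then have "q < j" using light_iff j by (metis not_le)
    also have "j \<le> Max (S i)" using feasible_finite[OF feas i] j by simp
    finally show ?thesis .
  qed
  moreover have "inj_on (\<lambda>i. Max (S i)) ?H"
  proof (rule inj_onI)
    fix i i' assume "i \<in> ?H" "i' \<in> ?H" "Max (S i) = Max (S i')"
    then have "i \<in> {1..k}" "i' \<in> {1..k}" unfolding heavy_indices_def by auto
    then have "Max (S i) \<in> S i \<inter> S i'"
      using feasible_Max_in[OF feas] \<open>Max (S i) = Max (S i')\<close> by (metis IntI)
    moreover note \<open>i \<in> {1..k}\<close> \<open>i' \<in> {1..k}\<close>
    ultimately show "i = i'" using feas unfolding feasible_def by blast
  qed
  moreover have "finite ?H" unfolding heavy_indices_def by simp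
  ultimately show ?thesis using ex_bij_betw_interval_le by blast
qed

lemma ex_optimal_heavy_singletons:
  assumes opt: "optimal n k p a S" and "1 \<le> k"
    and mono: "\<forall>i\<in>{1..n}. \<forall>j\<in>{1..n}. i \<le> j \<longrightarrow> a i \<le> a j"
    and light_iff: "\<forall>j\<in>{1..n}. a j \<le> Q \<longleftrightarrow> j \<le> q"
    and first: "setsum (S 1) a \<le> Q"
  shows "\<exists>T. optimal n k p a T \<and>
    (\<forall>i\<in>{1..k}. (\<forall>j\<in>T i. a j \<le> Q) \<longrightarrow> T i = S i) \<and>
    (\<forall>i\<in>{1..k}. (\<exists>j\<in>T i. Q < a j) \<longrightarrow> card (T i) = 1) \<and>
    (\<Union>i\<in>large_singletons Q k a T. T i) = {q+1..q + card (large_singletons Q k a T)}"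
proof -
  let ?H = "heavy_indices Q k a S"
  have feas: "feasible n k p S" using opt by (simp add: optimal_def)
  obtain g where g: "bij_betw g ?H {q+1..q + card ?H}" "\<forall>i\<in>?H. g i \<le> Max (S i)"
    using ex_heavy_positions[OF feas light_iff] by blast
  have q_less_g: "\<forall>i\<in>?H. q < g i" using bij_betw_apply[OF g(1)] by fastforce
  have heavy_g: "Q < a (g i)" if "i \<in> ?H" for i
  proof -
    have "i \<in> {1..k}" using that unfolding heavy_indices_def by simp
    then have "g i \<in> {1..n}"
      using q_less_g g(2) that feasible_Max_in[OF feas] feasible_subset[OF feas] by fastforce
    then show ?thesis using light_iff q_less_g that by (metis not_le)
  qed
  define T where "T = (\<lambda>i. if i \<in> ?H then {g i} else S i)"
  have "optimal n k p a T"
    unfolding T_def using optimal_heavy_to_singletons[OF opt \<open>1 \<le> k\<close> mono light_iff first]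
      bij_betw_imp_inj_on[OF g(1)] g(2) q_less_g by blast
  moreover have large: "large_singletons Q k a T = ?H"
    using heavy_g unfolding large_singletons_def heavy_indices_def T_def by auto
  moreover have "(\<Union>i\<in>large_singletons Q k a T. T i) = {q+1..q + card (large_singletons Q k a T)}"
    unfolding large using bij_betw_imp_surj_on[OF g(1)] by (auto simp: T_def)
  moreover have "\<forall>i\<in>{1..k}. (\<forall>j\<in>T i. a j \<le> Q) \<longrightarrow> T i = S i"
    unfolding T_def by (auto dest: heavy_g)
  moreover have "\<forall>i\<in>{1..k}. (\<exists>j\<in>T i. Q < a j) \<longrightarrow> card (T i) = 1"
    unfolding T_def heavy_indices_def by auto
  ultimately show ?thesis by blast
qed

theorem theorem9:
  fixes n k p :: nat and a :: "nat \<Rightarrow> nat"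
  assumes "k \<ge> 2"
    and "\<forall>i\<in>{1..n}. a i > 0"
    and "\<forall>i\<in>{1..n}. \<forall>j\<in>{1..n}. i \<le> j \<longrightarrow> a i \<le> a j"
    and "1 \<le> p" and "p + k \<le> n + 1"
  shows "let Q = (\<Sum>i=1..p. a i);
             q = Max {i\<in>{1..n}. a i \<le> Q}
         in \<exists>S. optimal n k p a S \<and>
              (\<forall>i\<in>{1..k}. (\<forall>j\<in>S i. a j \<le> Q) \<longrightarrow> setsum (S i) a < 2 * Q) \<and>
              (\<forall>i\<in>{1..k}. (\<exists>j\<in>S i. a j > Q) \<longrightarrow> card (S i) = 1) \<and>
              (let X = {i\<in>{1..k}. \<exists>j. S i = {j} \<and> a j > Q}
               in (\<Union>i\<in>X. S i) = {q+1..q + card X})"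
proof -
  define Q where "Q = (\<Sum>i=1..p. a i)"
  define q where "q = Max {i\<in>{1..n}. a i \<le> Q}"
  have "1 \<le> k" "p \<in> {1..n}" using assms(1,4,5) by auto
  have "a p \<le> Q" unfolding Q_def using assms(4) by (intro member_le_sum) auto
  then have "0 < Q" using assms(2) \<open>p \<in> {1..n}\<close> by fastforce
  have light_iff: "\<forall>j\<in>{1..n}. a j \<le> Q \<longleftrightarrow> j \<le> q"
    unfolding q_def using le_iff_le_Max_threshold[OF assms(3) \<open>p \<in> {1..n}\<close> \<open>a p \<le> Q\<close>] by blast
  have first: "setsum (T 1) a \<le> Q" if "optimal n k p a T" for T
    using that feasible_first_le_sum \<open>1 \<le> k\<close> unfolding optimal_def Q_def by blast
  obtain S where S: "optimal n k p a S"
    using ex_optimal feasible_consecutive_singletons assms(4,5) by blast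
  obtain S' where S': "optimal n k p a S'"
    "\<forall>i\<in>{1..k}. (\<forall>j\<in>S' i. a j \<le> Q) \<longrightarrow> setsum (S' i) a < 2 * Q"
    using ex_optimal_light_sums_lt[OF S \<open>1 \<le> k\<close> \<open>0 < Q\<close> first[OF S]] by blast
  obtain T where T: "optimal n k p a T"
    "\<forall>i\<in>{1..k}. (\<forall>j\<in>T i. a j \<le> Q) \<longrightarrow> T i = S' i"
    "\<forall>i\<in>{1..k}. (\<exists>j\<in>T i. Q < a j) \<longrightarrow> card (T i) = 1"
    "(\<Union>i\<in>large_singletons Q k a T. T i) = {q+1..q + card (large_singletons Q k a T)}"
    using ex_optimal_heavy_singletons[OF S'(1) \<open>1 \<le> k\<close> assms(3) light_iff first[OF S'(1)]]
    by blast
  have "\<forall>i\<in>{1..k}. (\<forall>j\<in>T i. a j \<le> Q) \<longrightarrow> setsum (T i) a < 2 * Q"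
    using S'(2) T(2) by (metis (no_types, lifting))
  then show ?thesis
    using T unfolding Let_def Q_def[symmetric] q_def[symmetric] large_singletons_def by blast
qed

end
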